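(* Let $n$ be an odd perfect square divisible by $p^4$ for some prime $p\ge7$. Then $C_{S(n)^*}=5$.
   Context: For a natural number $n$, $\mathbb Z_n=\mathbb Z/n\mathbb Z$, $S(n)=\{x^2:x\in\mathbb Z_n\}$, $S(n)^*=S(n)\setminus\{0\}$. For $A\subseteq\mathbb Z_n$, a sequence $(y_1,\dots,y_t)$ ($t\ge1$) in $\mathbb Z_n$ is an $A$-weighted zero-sum sequence if there exist $a_1,\dots,a_t\in A$ with $\sum a_iy_i=0$. $C_A(n)$ is the least positive integer $t$ such that every sequence of length $t$ in $\mathbb Z_n$ has a nonempty subsequence of consecutive terms that is an $A$-weighted zero-sum sequence; $C_{S(n)^*}=C_{S(n)^*}(n)$. *)

theory Defs
  imports Main "HOL-Computational_Algebra.Primes"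
begin

text \<open>Z_n is modelled by the integer residues {0..<n}; arithmetic is taken mod n.\<close>

definition Zn :: "nat \<Rightarrow> int set" where
  "Zn n = {0..<int n}"

definition Sq :: "nat \<Rightarrow> int set" where
  "Sq n = {(x^2) mod int n | x. x \<in> Zn n}"

definition Sq_star :: "nat \<Rightarrow> int set" where
  "Sq_star n = Sq n - {0}"

definition weighted_zero_sum :: "nat \<Rightarrow> int set \<Rightarrow> int list \<Rightarrow> bool" where
  "weighted_zero_sum n A ys \<longleftrightarrow> ys \<noteq> [] \<and>
     (\<exists>as. length as = length ys \<and> set as \<subseteq> A \<and>
           (\<Sum>i<length ys. as ! i * ys ! i) mod int n = 0)"

definition has_consec_wzs :: "nat \<Rightarrow> int set \<Rightarrow> int list \<Rightarrow> bool" where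
  "has_consec_wzs n A ys \<longleftrightarrow>
     (\<exists>i j. i < j \<and> j \<le> length ys \<and> weighted_zero_sum n A (take (j - i) (drop i ys)))"

definition C_A :: "int set \<Rightarrow> nat \<Rightarrow> nat" where
  "C_A A n = (LEAST t. t > 0 \<and>
     (\<forall>ys. length ys = t \<and> set ys \<subseteq> Zn n \<longrightarrow> has_consec_wzs n A ys))"

end

theory Submission
  imports Defs "HOL-Number_Theory.Number_Theory"
begin

text \<open>Write \<open>n = m\<^sup>2\<close> with \<open>m = p\<^sup>2 K\<close>.

  Every sequence of length five has a good consecutive subsequence: a term divisible by \<open>p\<^sup>2\<close> is
  killed alone by the weight \<open>(pK)\<^sup>2\<close>. Otherwise three of the five terms have the same \<open>p\<close>-adic
  valuation, \<open>0\<close> or \<open>1\<close>. A diagonal ternary form with unit coefficients has a zero with unit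
  coordinates modulo \<open>p\<close>, which Hensel's lemma lifts modulo \<open>p\<^sup>4\<close>; so these three terms receive weights
  \<open>(Kx)\<^sup>2\<close> with \<open>x\<close> prime to \<open>p\<close>, the other two the weight \<open>(pK)\<^sup>2\<close>, and the weighted sum of all five is
  divisible by \<open>p\<^sup>4 K\<^sup>2 = n\<close>.

  For the lower bound choose \<open>R\<close> divisible by exactly the first power of every prime \<open>q\<close> of \<open>m\<close>
  and \<open>v\<close> a nonresidue modulo every such \<open>q\<close>. Then \<open>q\<^bsup>2f\<^esub>\<close> dividing
  \<open>x\<^sub>0\<^sup>2 + R x\<^sub>1\<^sup>2 - v x\<^sub>2\<^sup>2 - v R x\<^sub>3\<^sup>2\<close> forces \<open>q\<^sup>f\<close> to divide all \<open>x\<^sub>i\<close>, so a zero of this form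
  modulo \<open>m\<^sup>2\<close> has all \<open>x\<^sub>i\<^sup>2 \<equiv> 0 (mod n)\<close>, and the sequence \<open>(1, R, -v, -vR)\<close> has no consecutive
  weighted zero-sum subsequence.\<close>

section \<open>Quadratic residues modulo an odd prime\<close>

lemma QuadRes_cong:
  assumes "[a = b] (mod m)" and "QuadRes m a"
  shows "QuadRes m b"
  using assms unfolding QuadRes_def using cong_trans by blast

lemma not_dvd_if_not_QuadRes:
  assumes "\<not> QuadRes m a"
  shows "\<not> m dvd a"
proof
  assume "m dvd a"
  hence "[0^2 = a] (mod m)" by (simp add: cong_def dvd_eq_mod_eq_0)
  with assms show False unfolding QuadRes_def by blast
qed

lemma square_mod_prime_in_units:
  assumes "prime p" and "x \<in> {1..int p - 1}"
  shows "x^2 mod int p \<in> {1..int p - 1}"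
proof -
  have "\<not> int p dvd x" using assms(2) zdvd_not_zless[of x "int p"] by auto
  hence "\<not> int p dvd x^2" using assms(1) prime_dvd_power[of "int p"] by auto
  hence "x^2 mod int p \<noteq> 0" by auto
  moreover have "0 \<le> x^2 mod int p" "x^2 mod int p < int p" using assms(1) prime_gt_0_nat by auto
  ultimately show ?thesis by auto
qed

text \<open>Squaring on the units \<open>1, \<dots>, p - 1\<close> identifies \<open>1\<close> and \<open>p - 1\<close>, so it misses some unit.\<close>
lemma nonresidue_exists:
  assumes "prime p" and "2 < p"
  obtains v :: nat where "0 < v" "v < p" "\<not> QuadRes (int p) (int v)"
proof -
  define A where "A = {1..int p - 1}"
  define f where "f = (\<lambda>x::int. x^2 mod int p)"
  have f_into: "f ` A \<subseteq> A"
    unfolding A_def f_def using square_mod_prime_in_units[OF assms(1)] by auto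
  have "f 1 = f (int p - 1)"
  proof -
    have "(int p - 1)^2 = int p * (int p - 2) + 1" by (simp add: power2_eq_square algebra_simps)
    thus ?thesis unfolding f_def by simp
  qed
  moreover have "1 \<in> A" "int p - 1 \<in> A" "(1::int) \<noteq> int p - 1" using assms unfolding A_def by auto
  ultimately have "\<not> inj_on f A" by (meson inj_on_contraD)
  hence "f ` A \<noteq> A" using eq_card_imp_inj_on[of A f] by (auto simp: A_def)
  then obtain k where k: "k \<in> A" "k \<notin> f ` A" using f_into by blast
  have "\<not> QuadRes (int p) k"
  proof
    assume "QuadRes (int p) k"
    then obtain y where "[y^2 = k] (mod int p)" unfolding QuadRes_def by blast
    hence fk: "f (y mod int p) = k" using k(1) unfolding f_def A_def cong_def
      by (auto simp: power_mod)
    hence "y mod int p \<noteq> 0" using k(1) unfolding f_def A_def by auto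
    moreover have "0 \<le> y mod int p" "y mod int p < int p" using assms by auto
    ultimately have "y mod int p \<in> A" unfolding A_def by auto
    with fk k(2) show False by blast
  qed
  moreover have "0 < nat k" "nat k < p" "int (nat k) = k" using k(1) unfolding A_def by auto
  ultimately show ?thesis using that by metis
qed

lemma not_dvd_if_square_cong:
  assumes "[y^2 = c] (mod m)" and "\<not> m dvd c"
  shows "\<not> m dvd y"
proof
  assume "m dvd y"
  hence "m dvd y^2" by (simp add: power2_eq_square)
  with assms show False using cong_dvd_iff by blast
qed

lemma QuadRes_mult_of_nonresidues:
  assumes p: "prime p" "2 < p"
    and a: "\<not> QuadRes (int p) a" and b: "\<not> QuadRes (int p) b"
  shows "QuadRes (int p) (a * b)"
proof (rule ccontr)
  assume ab: "\<not> QuadRes (int p) (a * b)"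
  have "prime (int p)" using p by simp
  have units: "\<not> [a = 0] (mod int p)" "\<not> [b = 0] (mod int p)" "\<not> [a * b = 0] (mod int p)"
    using not_dvd_if_not_QuadRes[OF a] not_dvd_if_not_QuadRes[OF b] not_dvd_if_not_QuadRes[OF ab]
    by (simp_all add: cong_0_iff)
  define k where "k = (p - 1) div 2"
  have "Legendre a (int p) = -1" "Legendre b (int p) = -1" "Legendre (a * b) (int p) = -1"
    using a b ab units unfolding Legendre_def by simp_all
  hence ea: "[-1 = a ^ k] (mod int p)" and eb: "[-1 = b ^ k] (mod int p)"
    and eab: "[-1 = (a * b) ^ k] (mod int p)"
    using euler_criterion[OF p] unfolding k_def by metis+
  have "[(-1) * (-1) = a ^ k * b ^ k] (mod int p)" by (rule cong_mult[OF ea eb])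
  also have "a ^ k * b ^ k = (a * b) ^ k" by (simp add: power_mult_distrib)
  also have "[(a * b) ^ k = -1] (mod int p)" using eab by (rule cong_sym)
  finally have "[1 = -1] (mod int p)" by simp
  hence "int p dvd 2" by (simp add: cong_iff_dvd_diff)
  hence "int p \<le> 2" by (rule zdvd_imp_le) simp
  with p show False by simp
qed

lemma QuadRes_mult_if_same_character:
  assumes "prime p" "2 < p" and "QuadRes (int p) a = QuadRes (int p) b"
  shows "QuadRes (int p) (a * b)"
proof (cases "QuadRes (int p) a")
  case True
  then obtain y1 y2 where "[y1^2 = a] (mod int p)" "[y2^2 = b] (mod int p)"
    using assms(3) unfolding QuadRes_def by blast
  hence "[(y1 * y2)^2 = a * b] (mod int p)" by (metis cong_mult power_mult_distrib)
  then show ?thesis unfolding QuadRes_def by blast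
next
  case False
  then show ?thesis using QuadRes_mult_of_nonresidues assms by simp
qed

text \<open>Otherwise every residue \<open>k = y\<^sup>2\<close> would make \<open>k + 1 = y\<^sup>2 + 1\<^sup>2\<close> a residue as well, and all units
  would be residues.\<close>
lemma nonresidue_sum_of_two_unit_squares:
  assumes p: "prime p" "2 < p"
  obtains a b :: int where "\<not> int p dvd a" "\<not> int p dvd b" "\<not> QuadRes (int p) (a^2 + b^2)"
proof -
  have "\<exists>a b. \<not> int p dvd a \<and> \<not> int p dvd b \<and> \<not> QuadRes (int p) (a^2 + b^2)"
  proof (rule ccontr)
    assume H: "\<nexists>a b. \<not> int p dvd a \<and> \<not> int p dvd b \<and> \<not> QuadRes (int p) (a^2 + b^2)"
    have all_res: "0 < k \<Longrightarrow> k < p \<Longrightarrow> QuadRes (int p) (int k)" for k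
    proof (induction k)
      case (Suc k)
      show ?case
      proof (cases "k = 0")
        case True
        then show ?thesis unfolding QuadRes_def by (intro exI[of _ 1]) simp
      next
        case False
        then obtain y where y: "[y^2 = int k] (mod int p)"
          using Suc unfolding QuadRes_def by auto
        have "\<not> int p dvd int k" using False Suc.prems by (auto dest: dvd_imp_le)
        with y have "\<not> int p dvd y" by (rule not_dvd_if_square_cong)
        moreover have "\<not> int p dvd 1" using p by simp
        ultimately have "QuadRes (int p) (y^2 + 1^2)" using H by blast
        moreover have "[y^2 + 1^2 = int (Suc k)] (mod int p)"
          using cong_add[OF y cong_refl[of "1::int"]] by (simp add: add.commute)
        ultimately show ?thesis using QuadRes_cong by blast
      qed
    qed simp
    obtain v where "0 < v" "v < p" "\<not> QuadRes (int p) (int v)"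
      using nonresidue_exists[OF p] .
    with all_res show False by blast
  qed
  with that show ?thesis by blast
qed

text \<open>For a residue \<open>c = t\<^sup>2\<close> use \<open>5\<^sup>2 t\<^sup>2 = (3t)\<^sup>2 + (4t)\<^sup>2\<close>; for a nonresidue \<open>c\<close>, the product of
  \<open>c\<close> with a nonresidue \<open>a\<^sup>2 + b\<^sup>2\<close> is a square \<open>u\<^sup>2\<close>, so
  \<open>(a\<^sup>2 + b\<^sup>2)\<^sup>2 c \<equiv> (au)\<^sup>2 + (bu)\<^sup>2\<close>.\<close>
lemma unit_multiple_sum_of_two_unit_squares:
  assumes p: "prime p" "5 < p" and c: "\<not> int p dvd c"
  obtains l x y where "\<not> int p dvd l" "\<not> int p dvd x" "\<not> int p dvd y"
    "[l^2 * c = x^2 + y^2] (mod int p)"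
proof (cases "QuadRes (int p) c")
  case True
  then obtain t where t: "[t^2 = c] (mod int p)" unfolding QuadRes_def by blast
  have pp: "prime (int p)" using p by simp
  have "\<not> int p dvd t" using t c by (rule not_dvd_if_square_cong)
  moreover have "\<not> int p dvd 3" "\<not> int p dvd 4" "\<not> int p dvd 5"
    using p zdvd_not_zless[of _ "int p"] by auto
  moreover have "[5^2 * c = (3*t)^2 + (4*t)^2] (mod int p)"
  proof -
    have "[(3*t)^2 + (4*t)^2 = 5^2 * t^2] (mod int p)" by (simp add: power_mult_distrib)
    also have "[5^2 * t^2 = 5^2 * c] (mod int p)" using t by (rule cong_scalar_left)
    finally show ?thesis by (rule cong_sym)
  qed
  ultimately show ?thesis using that[of 5 "3*t" "4*t"] pp by (simp add: prime_dvd_mult_iff)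
next
  case False
  have p2: "2 < p" using p by simp
  obtain a b where ab: "\<not> int p dvd a" "\<not> int p dvd b" "\<not> QuadRes (int p) (a^2 + b^2)"
    using nonresidue_sum_of_two_unit_squares[OF p(1) p2] .
  define s where "s = a^2 + b^2"
  have pp: "prime (int p)" using p by simp
  obtain u where u: "[u^2 = c * s] (mod int p)"
    using QuadRes_mult_of_nonresidues[OF p(1) p2 False] ab(3) unfolding s_def QuadRes_def by blast
  have s_unit: "\<not> int p dvd s" using not_dvd_if_not_QuadRes ab(3) s_def by simp
  have "\<not> int p dvd u"
    using u by (rule not_dvd_if_square_cong) (use c s_unit pp in \<open>simp add: prime_dvd_mult_iff\<close>)
  moreover have "[s^2 * c = (a*u)^2 + (b*u)^2] (mod int p)"
  proof -
    have "s^2 * c = s * (c * s)" by (simp add: power2_eq_square)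
    also have "[s * (c * s) = s * u^2] (mod int p)" using cong_sym[OF u] by (rule cong_scalar_left)
    also have "s * u^2 = (a*u)^2 + (b*u)^2" by (simp add: s_def power_mult_distrib distrib_right)
    finally show ?thesis .
  qed
  ultimately show ?thesis using that[of s "a*u" "b*u"] ab s_unit pp by (simp add: prime_dvd_mult_iff)
qed

section \<open>Diagonal ternary forms modulo prime powers\<close>

text \<open>With \<open>r\<^sup>2 \<equiv> w\<^sub>1 w\<^sub>2\<close> and \<open>l\<^sup>2 (-w\<^sub>1 w\<^sub>3) \<equiv> X\<^sup>2 + Y\<^sup>2\<close>, the point \<open>(X r, Y w\<^sub>1, l r w\<^sub>1)\<close> is a zero.\<close>
lemma ternary_form_unit_zero_mod_prime_of_QuadRes:
  assumes p: "prime p" "5 < p"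
    and w: "\<not> int p dvd w1" "\<not> int p dvd w2" "\<not> int p dvd w3"
    and res: "QuadRes (int p) (w1 * w2)"
  obtains x y z where "\<not> int p dvd x" "\<not> int p dvd y" "\<not> int p dvd z"
    "[w1 * x^2 + w2 * y^2 + w3 * z^2 = 0] (mod int p)"
proof -
  have pp: "prime (int p)" using p by simp
  obtain r where r: "[r^2 = w1 * w2] (mod int p)" using res unfolding QuadRes_def by blast
  have r_unit: "\<not> int p dvd r"
    using r by (rule not_dvd_if_square_cong) (use w pp in \<open>simp add: prime_dvd_mult_iff\<close>)
  define c where "c = -(w1 * w3)"
  have "\<not> int p dvd c" using w pp unfolding c_def by (simp add: prime_dvd_mult_iff)
  then obtain l X Y where lXY: "\<not> int p dvd l" "\<not> int p dvd X" "\<not> int p dvd Y"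
    "[l^2 * c = X^2 + Y^2] (mod int p)"
    using unit_multiple_sum_of_two_unit_squares[OF p] by metis
  have "w1 * (X * r)^2 + w2 * (Y * w1)^2 + w3 * (l * r * w1)^2
      = (r^2 - w1 * w2) * (w1 * X^2 + w3 * l^2 * w1^2) - w1^2 * w2 * (l^2 * c - (X^2 + Y^2))"
    by (simp add: c_def power2_eq_square algebra_simps)
  moreover have "int p dvd r^2 - w1 * w2" "int p dvd l^2 * c - (X^2 + Y^2)"
    using r lXY(4) by (simp_all add: cong_iff_dvd_diff)
  ultimately have "[w1 * (X * r)^2 + w2 * (Y * w1)^2 + w3 * (l * r * w1)^2 = 0] (mod int p)"
    by (simp add: cong_0_iff)
  moreover have "\<not> int p dvd X * r" "\<not> int p dvd Y * w1" "\<not> int p dvd l * r * w1"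
    using lXY r_unit w pp by (simp_all add: prime_dvd_mult_iff)
  ultimately show ?thesis using that by blast
qed

text \<open>Two of the three coefficients have the same quadratic character, so their product is a residue.\<close>
lemma ternary_form_unit_zero_mod_prime:
  assumes p: "prime p" "5 < p"
    and w: "\<not> int p dvd w1" "\<not> int p dvd w2" "\<not> int p dvd w3"
  obtains x y z where "\<not> int p dvd x" "\<not> int p dvd y" "\<not> int p dvd z"
    "[w1 * x^2 + w2 * y^2 + w3 * z^2 = 0] (mod int p)"
proof -
  have p2: "2 < p" using p by simp
  consider "QuadRes (int p) w1 = QuadRes (int p) w2" | "QuadRes (int p) w1 = QuadRes (int p) w3"
    | "QuadRes (int p) w2 = QuadRes (int p) w3" by blast
  then show ?thesis
  proof cases
    case 1
    show ?thesis
      by (rule ternary_form_unit_zero_mod_prime_of_QuadRes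
          [OF p w QuadRes_mult_if_same_character[OF p(1) p2 1]]) (rule that)
  next
    case 2
    then obtain x z y where "\<not> int p dvd x" "\<not> int p dvd z" "\<not> int p dvd y"
      "[w1 * x^2 + w3 * z^2 + w2 * y^2 = 0] (mod int p)"
      using ternary_form_unit_zero_mod_prime_of_QuadRes[OF p w(1,3,2)]
        QuadRes_mult_if_same_character[OF p(1) p2] by metis
    then show ?thesis using that[of x y z] by (simp add: ac_simps)
  next
    case 3
    then obtain y z x where "\<not> int p dvd y" "\<not> int p dvd z" "\<not> int p dvd x"
      "[w2 * y^2 + w3 * z^2 + w1 * x^2 = 0] (mod int p)"
      using ternary_form_unit_zero_mod_prime_of_QuadRes[OF p w(2,3,1)]
        QuadRes_mult_if_same_character[OF p(1) p2] by metis
    then show ?thesis using that[of x y z] by (simp add: ac_simps)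
  qed
qed

text \<open>The correction \<open>z + t p\<^sup>k\<close> with \<open>2 w z t \<equiv> (c - w z\<^sup>2) / p\<^sup>k\<close> (mod \<open>p\<close>) gains one power of \<open>p\<close>,
  since \<open>2 w z\<close> is a unit.\<close>
lemma hensel_step_unit_square:
  assumes p: "prime p" "2 < p"
    and w: "\<not> int p dvd w" and z: "\<not> int p dvd z" and k: "1 \<le> k"
    and c: "[w * z^2 = c] (mod int p ^ k)"
  obtains z' where "[z' = z] (mod int p)" "[w * z'^2 = c] (mod int p ^ Suc k)"
proof -
  have pp: "prime (int p)" using p by simp
  have "\<not> int p dvd 2" using p zdvd_imp_le[of "int p" 2] by auto
  hence "\<not> int p dvd 2 * w * z" using w z pp by (simp add: prime_dvd_mult_iff)
  hence "coprime (2 * w * z) (int p)" using prime_imp_coprime[OF pp] coprime_commute by blast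
  then obtain i where i: "[2 * w * z * i = 1] (mod int p)" using cong_solve_coprime_int by blast
  obtain s where s: "c - w * z^2 = int p ^ k * s"
    using c by (metis cong_iff_dvd_diff cong_sym dvdE)
  define t where "t = s * i"
  have "[2 * w * z * t = s] (mod int p)"
    using cong_scalar_left[OF i, of s] by (simp add: t_def algebra_simps)
  hence "int p dvd s - 2 * w * z * t" by (simp add: cong_iff_dvd_diff dvd_diff_commute)
  hence "int p ^ Suc k dvd int p ^ k * (s - 2 * w * z * t)" by simp
  moreover have "int p ^ Suc k dvd w * t^2 * int p ^ (2 * k)"
    using le_imp_power_dvd[of "Suc k" "2 * k" "int p"] k by simp
  moreover have "c - w * (z + t * int p ^ k)^2
      = int p ^ k * (s - 2 * w * z * t) - w * t^2 * int p ^ (2 * k)"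
    using s by (simp add: power2_eq_square algebra_simps flip: power_add mult_2)
  ultimately have "[w * (z + t * int p ^ k)^2 = c] (mod int p ^ Suc k)"
    by (metis cong_iff_dvd_diff cong_sym dvd_diff)
  moreover have "[z + t * int p ^ k = z + 0] (mod int p)"
    using k by (intro cong_add cong_refl) (simp add: cong_0_iff)
  ultimately show ?thesis using that by simp
qed

lemma hensel_lift_unit_square:
  assumes p: "prime p" "2 < p"
    and w: "\<not> int p dvd w" and z: "\<not> int p dvd z" and c: "[w * z^2 = c] (mod int p)"
    and k: "1 \<le> k"
  obtains z' where "[z' = z] (mod int p)" "[w * z'^2 = c] (mod int p ^ k)"
proof -
  have "\<exists>z'. [z' = z] (mod int p) \<and> [w * z'^2 = c] (mod int p ^ k)"
    using k
  proof (induction k rule: dec_induct)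
    case base
    show ?case using c by (intro exI[of _ z]) simp
  next
    case (step k)
    then obtain z' where z': "[z' = z] (mod int p)" "[w * z'^2 = c] (mod int p ^ k)" by blast
    have "\<not> int p dvd z'" using z cong_dvd_iff[OF z'(1)] by simp
    then obtain z'' where "[z'' = z'] (mod int p)" "[w * z''^2 = c] (mod int p ^ Suc k)"
      using hensel_step_unit_square[OF p w _ step(1) z'(2)] by blast
    with z'(1) show ?case using cong_trans by blast
  qed
  with that show ?thesis by blast
qed

lemma ternary_form_represents_mod_prime_power:
  assumes p: "prime p" "5 < p"
    and w: "\<not> int p dvd w1" "\<not> int p dvd w2" "\<not> int p dvd w3"
    and T: "int p dvd T" and k: "1 \<le> k"
  obtains x y z where "\<not> int p dvd x" "\<not> int p dvd y" "\<not> int p dvd z"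
    "[w1 * x^2 + w2 * y^2 + w3 * z^2 = T] (mod int p ^ k)"
proof -
  obtain x y z where xyz: "\<not> int p dvd x" "\<not> int p dvd y" "\<not> int p dvd z"
      "[w1 * x^2 + w2 * y^2 + w3 * z^2 = 0] (mod int p)"
    using ternary_form_unit_zero_mod_prime[OF p w] .
  have "[T = 0] (mod int p)" using T by (simp add: cong_0_iff)
  with xyz(4) have "[w1 * x^2 + w2 * y^2 + w3 * z^2 = T] (mod int p)"
    by (rule cong_trans[OF _ cong_sym])
  hence "[w3 * z^2 = T - w1 * x^2 - w2 * y^2] (mod int p)"
    by (simp add: cong_iff_dvd_diff algebra_simps)
  then obtain z' where z': "[z' = z] (mod int p)" "[w3 * z'^2 = T - w1 * x^2 - w2 * y^2] (mod int p ^ k)"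
    using hensel_lift_unit_square[OF p(1) _ w(3) xyz(3) _ k] p by auto
  have "\<not> int p dvd z'" using xyz(3) cong_dvd_iff[OF z'(1)] by simp
  moreover have "[w1 * x^2 + w2 * y^2 + w3 * z'^2 = T] (mod int p ^ k)"
    using z'(2) by (simp add: cong_iff_dvd_diff algebra_simps)
  ultimately show ?thesis using that xyz by blast
qed

section \<open>An anisotropic quaternary form\<close>

definition quaternary_form :: "int \<Rightarrow> int \<Rightarrow> int \<Rightarrow> int \<Rightarrow> int \<Rightarrow> int \<Rightarrow> int" where
  "quaternary_form R v x0 x1 x2 x3 = x0^2 + R * x1^2 - v * x2^2 - v * R * x3^2"

lemma quaternary_form_scale:
  "quaternary_form R v (c * x0) (c * x1) (c * x2) (c * x3) = c^2 * quaternary_form R v x0 x1 x2 x3"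
  by (simp add: quaternary_form_def algebra_simps)

lemma prime_dvd_binary_form_nonresidue:
  assumes q: "prime (q::int)" and v: "\<not> QuadRes q v" and d: "q dvd a^2 - v * b^2"
  shows "q dvd a \<and> q dvd b"
proof -
  have "q dvd b"
  proof (rule ccontr)
    assume "\<not> q dvd b"
    hence "coprime b q" using prime_imp_coprime[OF q] coprime_commute by blast
    then obtain i where i: "[b * i = 1] (mod q)" using cong_solve_coprime_int by blast
    have "[a^2 = v * b^2] (mod q)" using d by (simp add: cong_iff_dvd_diff)
    hence "[(a * i)^2 = v * b^2 * i^2] (mod q)" by (simp add: power_mult_distrib cong_scalar_right)
    also have "v * b^2 * i^2 = v * (b * i)^2" by (simp add: power_mult_distrib)
    also have "[v * (b * i)^2 = v * 1^2] (mod q)" using cong_pow[OF i] by (rule cong_scalar_left)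
    finally have "QuadRes q v" unfolding QuadRes_def by auto
    with v show False ..
  qed
  hence "q dvd v * b^2" by (simp add: power2_eq_square)
  with d have "q dvd (a^2 - v * b^2) + v * b^2" by (rule dvd_add)
  hence "q dvd a^2" by simp
  hence "q dvd a" using q prime_dvd_power by blast
  with \<open>q dvd b\<close> show ?thesis by simp
qed

text \<open>Reducing mod \<open>q\<close> kills the \<open>R\<close>-part and the binary form \<open>x\<^sub>0\<^sup>2 - v x\<^sub>2\<^sup>2\<close> is anisotropic; after
  dividing \<open>x\<^sub>0, x\<^sub>2\<close> by \<open>q\<close>, reducing mod \<open>q\<^sup>2\<close> and cancelling \<open>R = q R'\<close> does the same for
  \<open>x\<^sub>1, x\<^sub>3\<close>.\<close>
lemma prime_dvd_of_quaternary_form_zero_mod_square: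
  assumes q: "prime (q::int)" and v: "\<not> QuadRes q v" and R: "q dvd R" "\<not> q^2 dvd R"
    and d: "q^2 dvd quaternary_form R v x0 x1 x2 x3"
  shows "q dvd x0 \<and> q dvd x1 \<and> q dvd x2 \<and> q dvd x3"
proof -
  obtain R' where R': "R = q * R'" using R(1) by blast
  have "\<not> q dvd R'" using R(2) R' by (simp add: power2_eq_square)
  have "q \<noteq> 0" using q by auto
  have "q dvd q^2" by (simp add: power2_eq_square)
  then have "q dvd quaternary_form R v x0 x1 x2 x3" using d by (rule dvd_trans)
  moreover have "quaternary_form R v x0 x1 x2 x3 = (x0^2 - v * x2^2) + R' * (x1^2 - v * x3^2) * q"
    unfolding quaternary_form_def R' by (simp add: algebra_simps)
  ultimately have "q dvd x0^2 - v * x2^2" by (simp only: dvd_add_times_triv_right_iff)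
  hence "q dvd x0 \<and> q dvd x2" by (rule prime_dvd_binary_form_nonresidue[OF q v])
  then obtain y0 y2 where y: "x0 = q * y0" "x2 = q * y2" by (auto simp: dvd_def)
  have "quaternary_form R v x0 x1 x2 x3 = (y0^2 - v * y2^2) * q^2 + R' * (x1^2 - v * x3^2) * q"
    unfolding quaternary_form_def R' y by (simp add: power2_eq_square algebra_simps)
  with d have "q^2 dvd R' * (x1^2 - v * x3^2) * q" by (simp only: dvd_add_times_triv_left_iff)
  hence "q * q dvd R' * (x1^2 - v * x3^2) * q" by (simp only: power2_eq_square)
  hence "q dvd R' * (x1^2 - v * x3^2)" using \<open>q \<noteq> 0\<close> by (simp only: dvd_mult_cancel_right) simp
  hence "q dvd x1^2 - v * x3^2" using \<open>\<not> q dvd R'\<close> q by (simp add: prime_dvd_mult_iff)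
  hence "q dvd x1 \<and> q dvd x3" by (rule prime_dvd_binary_form_nonresidue[OF q v])
  with \<open>q dvd x0 \<and> q dvd x2\<close> show ?thesis by simp
qed

lemma prime_power_dvd_of_quaternary_form_zero_mod_square:
  assumes q: "prime (q::int)" and v: "\<not> QuadRes q v" and R: "q dvd R" "\<not> q^2 dvd R"
  shows "q^(2*f) dvd quaternary_form R v x0 x1 x2 x3 \<Longrightarrow>
    q^f dvd x0 \<and> q^f dvd x1 \<and> q^f dvd x2 \<and> q^f dvd x3"
proof (induction f arbitrary: x0 x1 x2 x3)
  case (Suc f)
  have "q^2 dvd q^(2 * Suc f)" by (rule le_imp_power_dvd) simp
  with Suc.prems have "q^2 dvd quaternary_form R v x0 x1 x2 x3" by (rule dvd_trans[rotated])
  hence "q dvd x0 \<and> q dvd x1 \<and> q dvd x2 \<and> q dvd x3"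
    by (rule prime_dvd_of_quaternary_form_zero_mod_square[OF q v R])
  then obtain y0 y1 y2 y3 where y: "x0 = q * y0" "x1 = q * y1" "x2 = q * y2" "x3 = q * y3"
    by (auto simp: dvd_def)
  have "q^(2 * Suc f) = q^2 * q^(2*f)" by (simp only: mult_Suc_right power_add)
  with Suc.prems have "q^2 * q^(2*f) dvd q^2 * quaternary_form R v y0 y1 y2 y3"
    unfolding y quaternary_form_scale by (simp only:)
  moreover have "q^2 \<noteq> 0" using q by auto
  ultimately have "q^(2*f) dvd quaternary_form R v y0 y1 y2 y3" by (simp only: dvd_mult_cancel_left) simp
  with Suc.IH show ?case unfolding y by (simp add: mult_dvd_mono)
qed simp

lemma prime_dvd_exactly_if_cong_mod_square:
  assumes q: "prime (q::int)" and "[R = q] (mod q^2)"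
  shows "q dvd R \<and> \<not> q^2 dvd R"
proof
  have dR: "q^2 dvd R - q" using assms(2) by (simp add: cong_iff_dvd_diff)
  hence "q dvd R - q" by (rule dvd_trans[rotated]) (simp add: power2_eq_square)
  hence "q dvd (R - q) + q" by (rule dvd_add) simp
  then show "q dvd R" by simp
  show "\<not> q^2 dvd R"
  proof
    assume "q^2 dvd R"
    with dR have "q^2 dvd R - (R - q)" by (rule dvd_diff[rotated])
    hence "q^2 \<le> q" using q by (simp add: zdvd_imp_le prime_gt_0_int)
    with prime_gt_1_int[OF q] show False by (simp add: power2_eq_square)
  qed
qed

text \<open>By the Chinese remainder theorem modulo the squares of the primes \<open>q\<close> of \<open>m\<close>, take \<open>R \<equiv> q\<close>
  and \<open>v\<close> congruent to a nonresidue of \<open>q\<close>.\<close>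
lemma exists_quaternary_form_coefficients:
  fixes m :: nat
  assumes "odd m"
  obtains R v :: int
  where "\<And>q. prime q \<Longrightarrow> q dvd int m \<Longrightarrow> q dvd R \<and> \<not> q^2 dvd R \<and> \<not> QuadRes q v"
proof -
  define A where "A = {q. prime q \<and> q dvd m}"
  have "0 < m" using assms by (cases m) auto
  hence "A \<subseteq> {..m}" unfolding A_def by (auto simp: dvd_imp_le)
  hence fin: "finite A" by (rule finite_subset) simp
  have cop: "\<forall>i\<in>A. \<forall>j\<in>A. i \<noteq> j \<longrightarrow> coprime (i^2) (j^2)"
    unfolding A_def by (auto simp: primes_coprime)
  have "\<forall>q\<in>A. \<exists>u. \<not> QuadRes (int q) (int u)"
  proof
    fix q assume "q \<in> A"
    hence q: "prime q" "q dvd m" unfolding A_def by auto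
    have "odd q" using q(2) assms dvd_trans by blast
    moreover have "2 \<le> q" using q(1) by (rule prime_ge_2_nat)
    ultimately have "2 < q" by presburger
    with q(1) obtain u where "\<not> QuadRes (int q) (int u)" by (rule nonresidue_exists)
    then show "\<exists>u. \<not> QuadRes (int q) (int u)" ..
  qed
  hence "\<exists>u. \<forall>q\<in>A. \<not> QuadRes (int q) (int (u q))" by (rule bchoice)
  then obtain u where u: "\<forall>q\<in>A. \<not> QuadRes (int q) (int (u q))" ..
  obtain R where R: "\<forall>q\<in>A. [R = q] (mod q^2)"
    using chinese_remainder_nat[OF fin cop, of id] by auto
  obtain v where v: "\<forall>q\<in>A. [v = u q] (mod q^2)"
    using chinese_remainder_nat[OF fin cop, of u] by auto
  have "q dvd int R \<and> \<not> q^2 dvd int R \<and> \<not> QuadRes q (int v)"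
    if q: "prime q" "q dvd int m" for q :: int
  proof -
    define qn where "qn = nat q"
    have qn: "q = int qn" unfolding qn_def using q(1) prime_ge_0_int by simp
    have "qn \<in> A" unfolding A_def using q qn by auto
    have "[int R = q] (mod q^2)"
      using R \<open>qn \<in> A\<close> unfolding qn by (simp add: cong_int_iff flip: of_nat_power)
    hence "q dvd int R \<and> \<not> q^2 dvd int R" by (rule prime_dvd_exactly_if_cong_mod_square[OF q(1)])
    moreover have "[int v = int (u qn)] (mod int (qn^2))" using v \<open>qn \<in> A\<close> cong_int_iff by blast
    hence "[int v = int (u qn)] (mod q)"
      by (rule cong_dvd_modulus) (simp add: qn power2_eq_square)
    hence "\<not> QuadRes q (int v)" using u \<open>qn \<in> A\<close> qn QuadRes_cong by metis
    ultimately show ?thesis by blast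
  qed
  with that show ?thesis by blast
qed

lemma dvd_if_prime_power_multiplicity_dvd:
  fixes M x :: int
  assumes M: "M \<noteq> 0" and H: "\<And>q. prime q \<Longrightarrow> q ^ multiplicity q M dvd x"
  shows "M dvd x"
proof (cases "x = 0")
  case False
  show ?thesis
  proof (rule multiplicity_le_imp_dvd[OF M])
    fix q :: int assume q: "prime q"
    hence "\<not> is_unit q" using not_prime_unit by blast
    show "multiplicity q M \<le> multiplicity q x" by (rule multiplicity_geI[OF False \<open>\<not> is_unit q\<close> H[OF q]])
  qed
qed simp

lemma dvd_of_quaternary_form_zero_mod_square:
  fixes m :: nat
  assumes m: "0 < m"
    and coeffs: "\<And>q. prime q \<Longrightarrow> q dvd int m \<Longrightarrow> q dvd R \<and> \<not> q^2 dvd R \<and> \<not> QuadRes q v"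
    and d: "int m ^ 2 dvd quaternary_form R v x0 x1 x2 x3"
  shows "int m dvd x0 \<and> int m dvd x1 \<and> int m dvd x2 \<and> int m dvd x3"
proof -
  have local: "q ^ f dvd x0 \<and> q ^ f dvd x1 \<and> q ^ f dvd x2 \<and> q ^ f dvd x3"
    if q: "prime q" and f: "f = multiplicity q (int m)" for q :: int and f
  proof (cases "q dvd int m")
    case False
    then show ?thesis using f by (simp add: not_dvd_imp_multiplicity_0)
  next
    case True
    have "q ^ f dvd int m" unfolding f by (rule multiplicity_dvd)
    hence "q ^ (2 * f) dvd int m ^ 2" by (simp add: power_mult mult.commute dvd_power_same)
    hence "q ^ (2 * f) dvd quaternary_form R v x0 x1 x2 x3" using d by (rule dvd_trans)
    then show ?thesis
      using coeffs[OF q True] by (intro prime_power_dvd_of_quaternary_form_zero_mod_square[OF q]) auto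
  qed
  have "int m \<noteq> 0" using m by simp
  then show ?thesis using local by (auto intro: dvd_if_prime_power_multiplicity_dvd)
qed

section \<open>Consecutive weighted zero-sum subsequences\<close>

lemma has_consec_wzs_take:
  assumes "has_consec_wzs n A (take s ys)"
  shows "has_consec_wzs n A ys"
proof -
  obtain i j where ij: "i < j" "j \<le> length (take s ys)"
    and wz: "weighted_zero_sum n A (take (j - i) (drop i (take s ys)))"
    using assms unfolding has_consec_wzs_def by blast
  have "min (j - i) (s - i) = j - i" using ij by auto
  hence "take (j - i) (drop i (take s ys)) = take (j - i) (drop i ys)" by (simp add: drop_take)
  with wz have "weighted_zero_sum n A (take (j - i) (drop i ys))" by simp
  moreover have "j \<le> length ys" using ij(2) by simp
  ultimately show ?thesis unfolding has_consec_wzs_def using ij(1) by blast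
qed

text \<open>Prefixes of a sequence without a consecutive weighted zero-sum subsequence have none either,
  so a single such sequence of length \<open>t - 1\<close> bounds \<open>C\<^sub>A(n)\<close> from below.\<close>
lemma C_A_eqI:
  assumes "0 < t"
    and good: "\<And>ys. length ys = t \<Longrightarrow> set ys \<subseteq> Zn n \<Longrightarrow> has_consec_wzs n A ys"
    and bad: "length zs = t - 1" "set zs \<subseteq> Zn n" "\<not> has_consec_wzs n A zs"
  shows "C_A A n = t"
  unfolding C_A_def
proof (rule Least_equality)
  show "0 < t \<and> (\<forall>ys. length ys = t \<and> set ys \<subseteq> Zn n \<longrightarrow> has_consec_wzs n A ys)"
    using assms(1) good by blast
next
  fix s assume s: "0 < s \<and> (\<forall>ys. length ys = s \<and> set ys \<subseteq> Zn n \<longrightarrow> has_consec_wzs n A ys)"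
  show "t \<le> s"
  proof (rule ccontr)
    assume "\<not> t \<le> s"
    hence "length (take s zs) = s" using bad(1) by simp
    moreover have "set (take s zs) \<subseteq> Zn n" by (rule subset_trans[OF set_take_subset bad(2)])
    ultimately have "has_consec_wzs n A (take s zs)" using spec[OF conjunct2[OF s]] by blast
    with bad(3) show False using has_consec_wzs_take by blast
  qed
qed

lemma three_agree_among_five:
  fixes b :: "nat \<Rightarrow> bool"
  obtains i j k where "{i, j, k} \<subseteq> {..<5}" "i \<noteq> j" "j \<noteq> k" "i \<noteq> k" "b j = b i" "b k = b i"
proof -
  define S where "S = (\<lambda>c. {l \<in> {..<5::nat}. b l = c})"
  have "card (S True) + card (S False) = card (S True \<union> S False)"
    by (rule card_Un_disjoint[symmetric]) (auto simp: S_def)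
  also have "S True \<union> S False = {..<5}" by (auto simp: S_def)
  finally have "card (S True) + card (S False) = 5" by simp
  hence "3 \<le> card (S True) \<or> 3 \<le> card (S False)" by linarith
  then obtain c where "3 \<le> card (S c)" by blast
  then obtain I where I: "I \<subseteq> S c" "card I = 3" by (rule obtain_subset_with_card_n)
  then obtain i j k where ijk: "I = {i, j, k}" "i \<noteq> j" "j \<noteq> k" "i \<noteq> k"
    by (auto simp: card_3_iff)
  show ?thesis by (rule that[of i j k]) (use I(1) ijk in \<open>auto simp: S_def\<close>)
qed

lemma power4_dvd_square_iff: "(a::int)^4 dvd x^2 \<longleftrightarrow> a^2 dvd x"
proof -
  have "a^4 = (a^2)^2" by simp
  then have "a^4 dvd x^2 \<longleftrightarrow> (a^2)^2 dvd x^2" by (simp only:)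
  also have "\<dots> \<longleftrightarrow> a^2 dvd x" by (rule pow_divides_pow_iff) simp
  finally show ?thesis .
qed

text \<open>If all three coefficients are divisible by \<open>p\<close>, divide by \<open>p\<close> and lift to \<open>p\<^sup>3\<close> instead of \<open>p\<^sup>4\<close>.\<close>
lemma ternary_form_zero_mod_p4_of_equal_valuations:
  assumes p: "prime p" "5 < p"
    and sq: "\<not> int p^2 dvd a" "\<not> int p^2 dvd b" "\<not> int p^2 dvd c"
    and same: "int p dvd b \<longleftrightarrow> int p dvd a" "int p dvd c \<longleftrightarrow> int p dvd a"
  obtains x y z where "\<not> int p dvd x" "\<not> int p dvd y" "\<not> int p dvd z"
    "int p^4 dvd a * x^2 + b * y^2 + c * z^2 + int p^2 * G"
proof (cases "int p dvd a")
  case False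
  with same have units: "\<not> int p dvd a" "\<not> int p dvd b" "\<not> int p dvd c" by simp_all
  have T: "int p dvd -(int p^2 * G)" by (simp add: power2_eq_square)
  obtain x y z where xyz: "\<not> int p dvd x" "\<not> int p dvd y" "\<not> int p dvd z"
      "[a * x^2 + b * y^2 + c * z^2 = -(int p^2 * G)] (mod int p ^ 4)"
    by (rule ternary_form_represents_mod_prime_power[OF p units T, of 4]) simp_all
  from xyz(4) have "int p^4 dvd a * x^2 + b * y^2 + c * z^2 + int p^2 * G"
    by (simp add: cong_iff_dvd_diff)
  with xyz(1-3) that show ?thesis by blast
next
  case True
  with same obtain a' b' c' where abc: "a = int p * a'" "b = int p * b'" "c = int p * c'"
    by (auto simp: dvd_def)
  with sq have units: "\<not> int p dvd a'" "\<not> int p dvd b'" "\<not> int p dvd c'"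
    by (auto simp: power2_eq_square)
  have T: "int p dvd -(int p * G)" by simp
  obtain x y z where xyz: "\<not> int p dvd x" "\<not> int p dvd y" "\<not> int p dvd z"
      "[a' * x^2 + b' * y^2 + c' * z^2 = -(int p * G)] (mod int p ^ 3)"
    by (rule ternary_form_represents_mod_prime_power[OF p units T, of 3]) simp_all
  from xyz(4) have "int p ^ 3 dvd a' * x^2 + b' * y^2 + c' * z^2 + int p * G"
    by (simp add: cong_iff_dvd_diff)
  hence "int p * int p ^ 3 dvd int p * (a' * x^2 + b' * y^2 + c' * z^2 + int p * G)"
    by (rule mult_dvd_mono[OF dvd_refl])
  also have "int p * (a' * x^2 + b' * y^2 + c' * z^2 + int p * G)
      = a * x^2 + b * y^2 + c * z^2 + int p^2 * G"
    unfolding abc by (simp add: power2_eq_square algebra_simps)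
  finally have "int p^4 dvd a * x^2 + b * y^2 + c * z^2 + int p^2 * G"
    by (simp add: numeral_eq_Suc)
  with xyz(1-3) that show ?thesis by blast
qed

text \<open>Three of the five terms share their \<open>p\<close>-adic valuation; they get unit weights solving a ternary
  congruence, the other two get the weight \<open>p\<^sup>2\<close>.\<close>
lemma five_term_square_weighted_sum_zero_mod_p4:
  fixes y :: "nat \<Rightarrow> int"
  assumes p: "prime p" "5 < p" and y: "\<And>l. l < 5 \<Longrightarrow> \<not> int p^2 dvd y l"
  obtains x where "\<And>l. l < 5 \<Longrightarrow> \<not> int p^2 dvd x l" "int p^4 dvd (\<Sum>l<5. (x l)^2 * y l)"
proof -
  obtain i j k where ijk: "{i, j, k} \<subseteq> {..<5}" "i \<noteq> j" "j \<noteq> k" "i \<noteq> k"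
      "int p dvd y j \<longleftrightarrow> int p dvd y i" "int p dvd y k \<longleftrightarrow> int p dvd y i"
    by (rule three_agree_among_five[of "\<lambda>l. int p dvd y l"]) blast
  define rest where "rest = {..<5} - {i, j, k}"
  have "i < 5" "j < 5" "k < 5" using ijk(1) by auto
  then obtain xi xj xk where units: "\<not> int p dvd xi" "\<not> int p dvd xj" "\<not> int p dvd xk"
      and sum: "int p^4 dvd y i * xi^2 + y j * xj^2 + y k * xk^2 + int p^2 * (\<Sum>l\<in>rest. y l)"
    using ternary_form_zero_mod_p4_of_equal_valuations[OF p y y y ijk(5,6), where G = "\<Sum>l\<in>rest. y l"]
    by blast
  define x where "x = (\<lambda>l. if l = i then xi else if l = j then xj else if l = k then xk else int p)"
  have "(\<Sum>l<5. (x l)^2 * y l) = (\<Sum>l\<in>rest. (x l)^2 * y l) + (\<Sum>l\<in>{i, j, k}. (x l)^2 * y l)"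
    unfolding rest_def by (rule sum.subset_diff[OF ijk(1)]) simp
  also have "(\<Sum>l\<in>rest. (x l)^2 * y l) = int p^2 * (\<Sum>l\<in>rest. y l)"
    unfolding sum_distrib_left by (rule sum.cong) (auto simp: rest_def x_def)
  also have "(\<Sum>l\<in>{i, j, k}. (x l)^2 * y l) = y i * xi^2 + y j * xj^2 + y k * xk^2"
    using ijk(2-4) by (simp add: x_def)
  finally have "int p^4 dvd (\<Sum>l<5. (x l)^2 * y l)" using sum by (simp add: ac_simps)
  moreover have "\<not> int p^2 dvd x l" for l
  proof -
    have "\<not> int p^2 dvd u" if "\<not> int p dvd u" for u
      using that dvd_trans[of "int p" "int p^2"] by (auto simp: power2_eq_square)
    moreover have "\<not> int p^2 dvd int p"
      using p zdvd_imp_le[of "int p^2" "int p"] by (auto simp: power2_eq_square)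
    ultimately show ?thesis using units unfolding x_def by auto
  qed
  ultimately show ?thesis using that by blast
qed

text \<open>Scaling by \<open>K\<close> turns a solution modulo \<open>d\<close> into one modulo \<open>n = d K\<^sup>2\<close>; the weights \<open>(K x)\<^sup>2\<close>
  stay nonzero as long as \<open>d\<close> does not divide \<open>x\<^sup>2\<close>.\<close>
lemma weighted_zero_sum_Sq_star_of_scaled_squares:
  assumes n: "int n = d * int K^2" "0 < n" and "zs \<noteq> []"
    and x: "\<And>l. l < length zs \<Longrightarrow> \<not> d dvd (x l)^2"
    and d: "d dvd (\<Sum>l<length zs. (x l)^2 * zs ! l)"
  shows "weighted_zero_sum n (Sq_star n) zs"
proof -
  define as where "as = map (\<lambda>l. (int K * x l)^2 mod int n) [0..<length zs]"
  have "(int K * x l)^2 mod int n \<in> Sq_star n" if l: "l < length zs" for l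
  proof -
    have "(int K * x l)^2 mod int n = ((int K * x l) mod int n)^2 mod int n" by (simp add: power_mod)
    moreover have "(int K * x l) mod int n \<in> Zn n" using n(2) by (simp add: Zn_def)
    ultimately have "(int K * x l)^2 mod int n \<in> Sq n" unfolding Sq_def by blast
    moreover have "(int K * x l)^2 mod int n \<noteq> 0"
    proof
      assume "(int K * x l)^2 mod int n = 0"
      hence "int n dvd (int K * x l)^2" by (simp add: dvd_eq_mod_eq_0)
      hence "d * int K^2 dvd (x l)^2 * int K^2" by (simp only: n(1) power_mult_distrib mult.commute)
      moreover have "int K^2 \<noteq> 0" using n by (cases "K = 0") auto
      ultimately have "d dvd (x l)^2" using dvd_mult_cancel_right[of d "int K^2" "(x l)^2"] by blast
      with x[OF l] show False ..
    qed
    ultimately show ?thesis unfolding Sq_star_def by simp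
  qed
  hence "set as \<subseteq> Sq_star n" unfolding as_def by auto
  moreover have "(\<Sum>l<length zs. as ! l * zs ! l) mod int n = 0"
  proof -
    have "[(\<Sum>l<length zs. as ! l * zs ! l) = (\<Sum>l<length zs. (int K * x l)^2 * zs ! l)] (mod int n)"
      by (rule cong_sum) (simp add: as_def cong_mult)
    moreover have "(\<Sum>l<length zs. (int K * x l)^2 * zs ! l) = int K^2 * (\<Sum>l<length zs. (x l)^2 * zs ! l)"
      by (simp add: sum_distrib_left power_mult_distrib ac_simps)
    moreover have "int n dvd int K^2 * (\<Sum>l<length zs. (x l)^2 * zs ! l)"
      unfolding n(1) using d by (simp add: mult.commute mult_dvd_mono)
    ultimately show ?thesis by (simp add: cong_def dvd_eq_mod_eq_0)
  qed
  moreover have "length as = length zs" by (simp add: as_def)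
  ultimately show ?thesis unfolding weighted_zero_sum_def using \<open>zs \<noteq> []\<close>
    by (intro conjI exI[of _ as]) simp_all
qed

lemma has_consec_wzs_of_length_five:
  assumes p: "prime p" "5 < p" and n: "int n = int p^4 * int K^2" "0 < n"
    and ys: "length ys = 5"
  shows "has_consec_wzs n (Sq_star n) ys"
proof (cases "\<exists>l<5. int p^2 dvd ys ! l")
  case True
  then obtain l where l: "l < 5" "int p^2 dvd ys ! l" by blast
  have "\<not> int p^2 dvd int p" using p zdvd_imp_le[of "int p^2" "int p"] by (auto simp: power2_eq_square)
  moreover have "int p^4 dvd (int p)^2 * ys ! l"
    using mult_dvd_mono[OF dvd_refl l(2), of "int p^2"] by (simp add: power_add[symmetric])
  ultimately have "weighted_zero_sum n (Sq_star n) [ys ! l]"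
    by (intro weighted_zero_sum_Sq_star_of_scaled_squares[OF n, where x = "\<lambda>_. int p"])
      (simp_all add: power4_dvd_square_iff)
  moreover have "take (Suc l - l) (drop l ys) = [ys ! l]"
    using l ys by (simp add: Cons_nth_drop_Suc[symmetric])
  moreover have "l < Suc l" "Suc l \<le> length ys" using l ys by simp_all
  ultimately show ?thesis unfolding has_consec_wzs_def by metis
next
  case False
  then obtain x where x: "\<And>l. l < 5 \<Longrightarrow> \<not> int p^2 dvd x l" "int p^4 dvd (\<Sum>l<5. (x l)^2 * ys ! l)"
    using five_term_square_weighted_sum_zero_mod_p4[OF p, of "\<lambda>l. ys ! l"] by blast
  have "weighted_zero_sum n (Sq_star n) ys"
    using x ys by (intro weighted_zero_sum_Sq_star_of_scaled_squares[OF n])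
      (auto simp: power4_dvd_square_iff)
  moreover have "take (5 - 0) (drop 0 ys) = ys" using ys by simp
  ultimately show ?thesis unfolding has_consec_wzs_def using ys by (metis le_refl zero_less_numeral)
qed

text \<open>A consecutive subsequence with weights \<open>x\<^sub>l\<^sup>2 \<noteq> 0\<close> extends by zero weights to the whole sequence.\<close>
lemma has_consec_wzs_Sq_star_imp_square_weights:
  assumes "has_consec_wzs n (Sq_star n) ys"
  obtains X i where "[(\<Sum>k<length ys. (X k)^2 * ys ! k) = 0] (mod int n)"
    "i < length ys" "\<not> int n dvd (X i)^2"
proof -
  obtain i j where ij: "i < j" "j \<le> length ys"
    and wz: "weighted_zero_sum n (Sq_star n) (take (j - i) (drop i ys))"
    using assms unfolding has_consec_wzs_def by blast
  obtain as where as: "length as = j - i" "set as \<subseteq> Sq_star n"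
    "(\<Sum>l<j - i. as ! l * take (j - i) (drop i ys) ! l) mod int n = 0"
    using wz ij unfolding weighted_zero_sum_def by auto
  have "\<forall>l\<in>{..<j - i}. \<exists>x. as ! l = x^2 mod int n \<and> as ! l \<noteq> 0"
  proof
    fix l assume "l \<in> {..<j - i}"
    hence "as ! l \<in> Sq_star n" using as(1,2) nth_mem by (metis lessThan_iff subsetD)
    then show "\<exists>x. as ! l = x^2 mod int n \<and> as ! l \<noteq> 0" unfolding Sq_star_def Sq_def by auto
  qed
  then obtain x where x: "\<And>l. l < j - i \<Longrightarrow> as ! l = (x l)^2 mod int n \<and> as ! l \<noteq> 0"
    by (metis lessThan_iff)
  define X where "X = (\<lambda>k. if i \<le> k \<and> k < j then x (k - i) else 0)"
  have "(\<Sum>k<length ys. (X k)^2 * ys ! k) = (\<Sum>k\<in>{i..<j}. (X k)^2 * ys ! k)"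
    using ij by (intro sum.mono_neutral_right) (auto simp: X_def)
  also have "\<dots> = (\<Sum>l<j - i. (x l)^2 * ys ! (i + l))"
    using ij by (simp add: sum.atLeastLessThan_shift_0[of _ i j] X_def add.commute lessThan_atLeast0)
  also have "[\<dots> = (\<Sum>l<j - i. as ! l * take (j - i) (drop i ys) ! l)] (mod int n)"
    using ij x by (intro cong_sum cong_mult) (auto simp: cong_def)
  also have "[(\<Sum>l<j - i. as ! l * take (j - i) (drop i ys) ! l) = 0] (mod int n)"
    using as(3) by (simp add: cong_def)
  finally have "[(\<Sum>k<length ys. (X k)^2 * ys ! k) = 0] (mod int n)" .
  moreover have "i < length ys" using ij by simp
  moreover have "\<not> int n dvd (X i)^2"
    using x[of 0] ij by (auto simp: X_def dvd_eq_mod_eq_0)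
  ultimately show ?thesis by (rule that)
qed

lemma not_has_consec_wzs_quaternary_coefficients:
  fixes m :: nat
  assumes m: "0 < m" and n: "n = m^2"
    and coeffs: "\<And>q. prime q \<Longrightarrow> q dvd int m \<Longrightarrow> q dvd R \<and> \<not> q^2 dvd R \<and> \<not> QuadRes q v"
  shows "\<not> has_consec_wzs n (Sq_star n) (map (\<lambda>z. z mod int n) [1, R, -v, -(v * R)])"
    (is "\<not> has_consec_wzs n _ ?ys")
proof
  assume "has_consec_wzs n (Sq_star n) ?ys"
  then obtain X i where X: "[(\<Sum>k<length ?ys. (X k)^2 * ?ys ! k) = 0] (mod int n)"
    and i: "i < length ?ys" "\<not> int n dvd (X i)^2"
    by (rule has_consec_wzs_Sq_star_imp_square_weights)
  have len: "length ?ys = 4" by simp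
  have "quaternary_form R v (X 0) (X 1) (X 2) (X 3) = (\<Sum>k<4. (X k)^2 * [1, R, -v, -(v * R)] ! k)"
    by (simp add: quaternary_form_def eval_nat_numeral algebra_simps)
  also have "[\<dots> = (\<Sum>k<4. (X k)^2 * ?ys ! k)] (mod int n)"
  proof (rule cong_sum)
    fix k :: nat assume "k \<in> {..<4}"
    hence "?ys ! k = [1, R, -v, -(v * R)] ! k mod int n" by (intro nth_map) simp
    then show "[(X k)^2 * [1, R, -v, -(v * R)] ! k = (X k)^2 * ?ys ! k] (mod int n)"
      by (simp add: cong_def mod_mult_right_eq)
  qed
  also have "[(\<Sum>k<4. (X k)^2 * ?ys ! k) = 0] (mod int n)" using X unfolding len .
  finally have "int m ^ 2 dvd quaternary_form R v (X 0) (X 1) (X 2) (X 3)"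
    unfolding n by (simp add: cong_0_iff)
  hence "int m dvd X 0 \<and> int m dvd X 1 \<and> int m dvd X 2 \<and> int m dvd X 3"
    using dvd_of_quaternary_form_zero_mod_square[OF m coeffs] by blast
  with i(1) have "int m dvd X i" by (auto simp: less_Suc_eq numeral_eq_Suc)
  hence "int n dvd (X i)^2" unfolding n by simp
  with i(2) show False ..
qed

theorem mainTheorem18:
  fixes n p :: nat
  assumes "odd n"
    and "\<exists>m. n = m^2"
    and "prime p" and "p \<ge> 7" and "p^4 dvd n"
  shows "C_A (Sq_star n) n = 5"
proof -
  obtain m where n: "n = m^2" using assms(2) by blast
  have "odd m" using assms(1) n by simp
  hence "0 < m" by (cases m) auto
  have "(p^2)^2 dvd m^2" using assms(5) n by simp
  hence "p^2 dvd m" by (metis pow_divides_pow_iff zero_less_numeral)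
  then obtain K where "m = p^2 * K" by (auto simp: dvd_def)
  hence nK: "int n = int p^4 * int K^2" unfolding n by (simp add: power_mult_distrib flip: power_mult)
  obtain R v where coeffs: "\<And>q. prime q \<Longrightarrow> q dvd int m \<Longrightarrow> q dvd R \<and> \<not> q^2 dvd R \<and> \<not> QuadRes q v"
    using exists_quaternary_form_coefficients[OF \<open>odd m\<close>] by metis
  have "0 < n" using \<open>0 < m\<close> n by simp
  show ?thesis
  proof (rule C_A_eqI)
    show "has_consec_wzs n (Sq_star n) ys" if "length ys = 5" for ys
      using has_consec_wzs_of_length_five assms(3,4) nK \<open>0 < n\<close> that by simp
    show "set (map (\<lambda>z. z mod int n) [1, R, -v, -(v * R)]) \<subseteq> Zn n"
      using \<open>0 < n\<close> by (auto simp: Zn_def)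
    show "\<not> has_consec_wzs n (Sq_star n) (map (\<lambda>z. z mod int n) [1, R, -v, -(v * R)])"
      by (rule not_has_consec_wzs_quaternary_coefficients[OF \<open>0 < m\<close> n coeffs])
  qed simp_all
qed

end
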